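(* Let $I$ be a squarefree monomial ideal in a polynomial ring $S$ over a field that is nearly a complete intersection (NCI). If $m_1$ and $m_2$ are two distinct minimal monomial generators of $I$, then $\gcd(m_1,m_2)$ has degree at most $1$.
   Context: An ideal is a complete intersection (CI) if it is generated by a regular sequence. The support of a monomial ideal is the set of variables appearing in at least one minimal monomial generator. For a squarefree monomial ideal $I$ and a variable $x$, $I(x=1)$ denotes the ideal generated by the monomials obtained from the minimal monomial generators of $I$ by setting $x = 1$. A squarefree monomial ideal $I$ is NCI if it is generated in degree at least two, is not a CI, and for each variable $x$ in the support of $I$, $I(x=1)$ is a CI. *)

theory Defs
  imports "HOL-Library.Poly_Mapping"
begin

(* Polynomial ring S = k[x_v : v in 'v] is modelled as finitely supported maps
   from exponent vectors to coefficients; the monomial x^a is single a 1. *)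

type_synonym ('v, 'k) mpoly = "('v \<Rightarrow>\<^sub>0 nat) \<Rightarrow>\<^sub>0 'k"

definition monom :: "('v \<Rightarrow>\<^sub>0 nat) \<Rightarrow> ('v, 'k::comm_ring_1) mpoly" where
  "monom a = Poly_Mapping.single a 1"

definition ideal_gen :: "('v, 'k::comm_ring_1) mpoly set \<Rightarrow> ('v, 'k) mpoly set" where
  "ideal_gen G = {p. \<exists>F r. finite F \<and> F \<subseteq> G \<and> p = (\<Sum>g\<in>F. r g * g)}"

definition regular_sequence :: "('v, 'k::comm_ring_1) mpoly list \<Rightarrow> bool" where
  "regular_sequence fs \<longleftrightarrow>
     (\<forall>i < length fs. \<forall>g. fs ! i * g \<in> ideal_gen (set (take i fs))
                          \<longrightarrow> g \<in> ideal_gen (set (take i fs)))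
     \<and> ideal_gen (set fs) \<noteq> UNIV"

definition is_CI :: "('v, 'k::comm_ring_1) mpoly set \<Rightarrow> bool" where
  "is_CI I \<longleftrightarrow> (\<exists>fs. regular_sequence fs \<and> I = ideal_gen (set fs))"

definition squarefree_exp :: "('v \<Rightarrow>\<^sub>0 nat) \<Rightarrow> bool" where
  "squarefree_exp a \<longleftrightarrow> (\<forall>v. Poly_Mapping.lookup a v \<le> 1)"

definition mdvd :: "('v \<Rightarrow>\<^sub>0 nat) \<Rightarrow> ('v \<Rightarrow>\<^sub>0 nat) \<Rightarrow> bool" where
  "mdvd b a \<longleftrightarrow> (\<forall>v. Poly_Mapping.lookup b v \<le> Poly_Mapping.lookup a v)"

definition mdeg :: "('v \<Rightarrow>\<^sub>0 nat) \<Rightarrow> nat" where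
  "mdeg a = (\<Sum>v\<in>Poly_Mapping.keys a. Poly_Mapping.lookup a v)"

definition mgcd :: "('v \<Rightarrow>\<^sub>0 nat) \<Rightarrow> ('v \<Rightarrow>\<^sub>0 nat) \<Rightarrow> ('v \<Rightarrow>\<^sub>0 nat)" where
  "mgcd a b = Abs_poly_mapping (\<lambda>v. min (Poly_Mapping.lookup a v) (Poly_Mapping.lookup b v))"

definition squarefree_monomial_ideal :: "('v, 'k::comm_ring_1) mpoly set \<Rightarrow> bool" where
  "squarefree_monomial_ideal I \<longleftrightarrow>
     (\<exists>A. (\<forall>a\<in>A. squarefree_exp a) \<and> I = ideal_gen (monom ` A))"

definition min_gens :: "('v, 'k::comm_ring_1) mpoly set \<Rightarrow> ('v \<Rightarrow>\<^sub>0 nat) set" where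
  "min_gens I = {a. monom a \<in> I \<and> (\<forall>b. monom b \<in> I \<and> mdvd b a \<longrightarrow> b = a)}"

definition ideal_support :: "('v, 'k::comm_ring_1) mpoly set \<Rightarrow> 'v set" where
  "ideal_support I = (\<Union>a\<in>min_gens I. Poly_Mapping.keys a)"

text \<open>I(x=1): generated by the minimal generators of I with x set to 1.\<close>
definition set_var_one :: "('v, 'k::comm_ring_1) mpoly set \<Rightarrow> 'v \<Rightarrow> ('v, 'k) mpoly set" where
  "set_var_one I x = ideal_gen ((\<lambda>a. monom (Poly_Mapping.update x 0 a)) ` min_gens I)"

definition is_NCI :: "('v, 'k::comm_ring_1) mpoly set \<Rightarrow> bool" where
  "is_NCI I \<longleftrightarrow> squarefree_monomial_ideal I
     \<and> (\<forall>a\<in>min_gens I. mdeg a \<ge> 2)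
     \<and> \<not> is_CI I
     \<and> (\<forall>x\<in>ideal_support I. is_CI (set_var_one I x))"

end

theory Submission
  imports Defs "HOL.Modules"
begin

(*
  Suppose two distinct variables x and y divide both m1 and m2. Setting x = 1 keeps the
  images of m1 and m2 distinct minimal generators of I(x=1), both still divisible by y,
  and I(x=1) is generated by a regular sequence f. That is impossible: for minimal
  monomial generators p = y P and q = y Q of such an ideal, the relation Q p = P q lifts
  to a syzygy of f, whose coefficients lie in the ideal because f is regular. Writing
  every f_k as a multiple of p modulo the other generators turns this into an element of
  the ideal in which the monomial Q = q / y occurs with coefficient 1, so some generator
  divides q / y, contradicting the minimality of q.
*)

interpretation ideal: module "(*) :: 'a::comm_ring_1 \<Rightarrow> 'a \<Rightarrow> 'a"
  by standard (simp_all add: algebra_simps)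

(* scale_scale is mult.assoc read backwards; as a simp rule it makes simp loop. *)
declare ideal.scale_scale [simp del]

lemma ideal_gen_eq_span: "ideal_gen G = ideal.span G"
  unfolding ideal_gen_def ideal.span_explicit by blast

lemma span_set_take_iff_sum_nth:
  fixes xs :: "'a::comm_ring_1 list"
  assumes "n \<le> length xs"
  shows "h \<in> ideal.span (set (take n xs)) \<longleftrightarrow> (\<exists>c. h = (\<Sum>k<n. c k * xs ! k))"
proof
  assume "h \<in> ideal.span (set (take n xs))"
  then show "\<exists>c. h = (\<Sum>k<n. c k * xs ! k)"
  proof (induction rule: ideal.span_induct_alt)
    case base
    show ?case by (rule exI[of _ "\<lambda>_. 0"]) simp
  next
    case (step a x y)
    from step.hyps(1) obtain i where i: "i < n" "x = xs ! i"
      using assms by (auto simp: in_set_conv_nth)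
    from step.IH obtain c where "y = (\<Sum>k<n. c k * xs ! k)" by blast
    then have "a * x + y = (\<Sum>k<n. (c k + (if k = i then a else 0)) * xs ! k)"
      using i by (simp add: distrib_right sum.distrib if_distrib[of "\<lambda>b. b * _"])
    then show ?case by metis
  qed
next
  assume "\<exists>c. h = (\<Sum>k<n. c k * xs ! k)"
  then obtain c where h: "h = (\<Sum>k<n. c k * xs ! k)" by blast
  have "xs ! k \<in> set (take n xs)" if "k < n" for k
    using that assms by (metis in_set_conv_nth length_take min.absorb2 nth_take)
  then show "h \<in> ideal.span (set (take n xs))"
    unfolding h by (intro ideal.span_sum ideal.span_scale ideal.span_base) simp
qed

lemma span_set_iff_sum_nth:
  fixes xs :: "'a::comm_ring_1 list"
  shows "h \<in> ideal.span (set xs) \<longleftrightarrow> (\<exists>c. h = (\<Sum>k<length xs. c k * xs ! k))"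
  using span_set_take_iff_sum_nth[of "length xs" xs] by simp

lemma span_insert_obtain_coeffs:
  fixes fs :: "'a::comm_ring_1 list"
  assumes "set fs \<subseteq> ideal.span (insert g S)"
  obtains \<alpha> where "\<And>k. k < length fs \<Longrightarrow> fs ! k - \<alpha> k * g \<in> ideal.span S"
proof -
  have "\<exists>a. fs ! k - a * g \<in> ideal.span S" if "k < length fs" for k
    using assms that ideal.span_breakdown_eq by (metis nth_mem subsetD)
  then show ?thesis using that by metis
qed

definition weakly_regular :: "'a::comm_ring_1 list \<Rightarrow> bool" where
  "weakly_regular fs \<longleftrightarrow> (\<forall>i < length fs. \<forall>g.
     fs ! i * g \<in> ideal.span (set (take i fs)) \<longrightarrow> g \<in> ideal.span (set (take i fs)))"

lemma regular_sequence_imp_weakly_regular: "regular_sequence fs \<Longrightarrow> weakly_regular fs"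
  unfolding regular_sequence_def weakly_regular_def ideal_gen_eq_span by blast

lemma weakly_regular_syzygy_coeff_in_span:
  fixes fs :: "'a::comm_ring_1 list"
  assumes reg: "weakly_regular fs"
    and "n \<le> length fs" "(\<Sum>k<n. c k * fs ! k) = 0" "k < n"
  shows "c k \<in> ideal.span (set (take n fs))"
  using assms(2-)
proof (induction n arbitrary: c k)
  case 0
  then show ?case by simp
next
  case (Suc n)
  let ?J = "ideal.span (set (take n fs))"
  let ?J' = "ideal.span (set (take (Suc n) fs))"
  have n: "n < length fs" using Suc.prems(1) by simp
  have "?J \<subseteq> ?J'" by (intro ideal.span_mono set_take_subset_set_take) simp
  have fn: "fs ! n \<in> ?J'" by (intro ideal.span_base) (simp add: n take_Suc_conv_app_nth)
  have syz: "(\<Sum>k<n. c k * fs ! k) + fs ! n * c n = 0"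
    using Suc.prems(2) by (simp add: mult.commute)
  have "(\<Sum>k<n. c k * fs ! k) \<in> ?J"
    unfolding span_set_take_iff_sum_nth[OF less_imp_le[OF n]] by blast
  then have "- (\<Sum>k<n. c k * fs ! k) \<in> ?J" by (rule ideal.span_neg)
  moreover have "- (\<Sum>k<n. c k * fs ! k) = fs ! n * c n"
    using syz by (simp add: neg_eq_iff_add_eq_0)
  ultimately have "fs ! n * c n \<in> ?J" by simp
  then have cn: "c n \<in> ?J" using reg n unfolding weakly_regular_def by blast
  then obtain e where e: "c n = (\<Sum>k<n. e k * fs ! k)"
    using cn unfolding span_set_take_iff_sum_nth[OF less_imp_le[OF n]] by blast
  define c' where "c' k = c k + e k * fs ! n" for k
  have "(\<Sum>k<n. c' k * fs ! k) = (\<Sum>k<n. c k * fs ! k) + fs ! n * (\<Sum>k<n. e k * fs ! k)"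
    unfolding c'_def by (simp add: sum.distrib sum_distrib_left algebra_simps)
  also have "\<dots> = 0" using syz unfolding e .
  finally have "(\<Sum>k<n. c' k * fs ! k) = 0" .
  then have c'J: "c' k \<in> ?J" if "k < n" for k using Suc.IH[of c' k] n that by simp
  show ?case
  proof (cases "k = n")
    case True
    then show ?thesis using cn \<open>?J \<subseteq> ?J'\<close> by auto
  next
    case False
    then have "c' k \<in> ?J'" using Suc.prems(3) c'J \<open>?J \<subseteq> ?J'\<close> by auto
    moreover have "e k * fs ! n \<in> ?J'" using fn by (rule ideal.span_scale)
    ultimately have "c' k - e k * fs ! n \<in> ?J'" by (rule ideal.span_diff)
    then show ?thesis unfolding c'_def by simp
  qed
qed

lemma weakly_regular_cross_coeffs_in_span:
  fixes fs :: "'a::comm_ring_1 list"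
  assumes "weakly_regular fs"
    and "a = (\<Sum>k<length fs. \<beta> k * fs ! k)" "b = (\<Sum>k<length fs. \<gamma> k * fs ! k)"
    and "u * a = v * b" "k < length fs"
  shows "u * \<beta> k - v * \<gamma> k \<in> ideal.span (set fs)"
proof -
  have "(\<Sum>k<length fs. (u * \<beta> k - v * \<gamma> k) * fs ! k) = u * a - v * b"
    unfolding assms(2,3) by (simp add: left_diff_distrib sum_subtractf sum_distrib_left mult.assoc)
  then show ?thesis
    using weakly_regular_syzygy_coeff_in_span[OF assms(1) order_refl, of "\<lambda>k. u * \<beta> k - v * \<gamma> k"]
      assms(4,5) by simp
qed

lemma mdvd_add_right: "mdvd a (a + b)"
  by (simp add: mdvd_def lookup_add)

lemma mdvd_trans: "mdvd a b \<Longrightarrow> mdvd b c \<Longrightarrow> mdvd a c"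
  unfolding mdvd_def using le_trans by blast

lemma mdvd_add_cancel_right: "mdvd (a + c) (b + c) \<longleftrightarrow> mdvd a b"
  by (simp add: mdvd_def lookup_add)

lemma not_mdvd_add_single: "\<not> mdvd (a + Poly_Mapping.single y 1) a"
proof
  assume "mdvd (a + Poly_Mapping.single y 1) a"
  then have "Poly_Mapping.lookup a y + 1 \<le> Poly_Mapping.lookup a y"
    unfolding mdvd_def by (metis lookup_add lookup_single_eq)
  then show False by simp
qed

lemma keys_times_monom_mdvd:
  fixes f :: "('v, 'k::comm_ring_1) mpoly"
  assumes "u \<in> Poly_Mapping.keys (f * monom a)"
  shows "mdvd a u"
  using assms keys_mult[of f "monom a"] by (auto simp: monom_def add.commute[of _ a] intro!: mdvd_add_right)

lemma lookup_times_monom: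
  fixes f :: "('v, 'k::comm_ring_1) mpoly"
  shows "Poly_Mapping.lookup (f * monom p) (u + p) = Poly_Mapping.lookup f u"
proof -
  have "(\<Sum>q. Poly_Mapping.lookup (monom p :: ('v, 'k) mpoly) q when u + p = l + q) = (1 when l = u)" for l
  proof -
    have "(\<Sum>q. Poly_Mapping.lookup (monom p :: ('v, 'k) mpoly) q when u + p = l + q)
        = (\<Sum>q. ((1 when u + p = l + q) when q = p))"
      by (rule Sum_any.cong) (auto simp: monom_def lookup_single when_def)
    also have "\<dots> = (1 when u + p = l + p)" by (rule Sum_any_when_equal)
    finally show ?thesis by (auto simp: when_def)
  qed
  then show ?thesis by (simp add: lookup_mult mult_when)
qed

lemma keys_span_monom_dvd:
  assumes "h \<in> ideal.span (monom ` B :: ('v, 'k::comm_ring_1) mpoly set)" "u \<in> Poly_Mapping.keys h"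
  shows "\<exists>b\<in>B. mdvd b u"
proof -
  have "\<forall>u \<in> Poly_Mapping.keys h. \<exists>b\<in>B. mdvd b u"
    using assms(1)
  proof (induction rule: ideal.span_induct_alt)
    case base
    show ?case by simp
  next
    case (step c g h)
    then obtain a where "a \<in> B" "g = monom a" by blast
    then have "\<forall>u \<in> Poly_Mapping.keys (c * g). \<exists>b\<in>B. mdvd b u"
      using keys_times_monom_mdvd by blast
    then show ?case using step.IH keys_add[of "c * g" h] by blast
  qed
  then show ?thesis using assms(2) by blast
qed

lemma diff_single_add_single:
  fixes a :: "'v \<Rightarrow>\<^sub>0 nat"
  assumes "Poly_Mapping.lookup a y \<noteq> 0"
  shows "a = (a - Poly_Mapping.single y 1) + Poly_Mapping.single y 1"
  by (rule poly_mapping_eqI) (use assms in \<open>auto simp: lookup_add lookup_minus lookup_single when_def\<close>)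

lemma minimal_monom_const_coeff_eq_one:
  fixes fs :: "('v, 'k::comm_ring_1) mpoly list"
  assumes p: "p \<in> B" "\<And>b. b \<in> B \<Longrightarrow> mdvd b p \<Longrightarrow> b = p"
    and \<beta>: "monom p = (\<Sum>k<length fs. \<beta> k * fs ! k)"
    and \<alpha>: "\<And>k. k < length fs \<Longrightarrow> fs ! k - \<alpha> k * monom p \<in> ideal.span (monom ` (B - {p}))"
  shows "Poly_Mapping.lookup (\<Sum>k<length fs. \<beta> k * \<alpha> k) 0 = 1"
proof -
  define N where "N = (\<Sum>k<length fs. \<beta> k * \<alpha> k)"
  have "monom p - N * monom p = (\<Sum>k<length fs. \<beta> k * (fs ! k - \<alpha> k * monom p))"
    unfolding N_def \<beta> by (simp add: right_diff_distrib sum_subtractf sum_distrib_right mult.assoc)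
  also have "\<dots> \<in> ideal.span (monom ` (B - {p}))"
    using \<alpha> by (intro ideal.span_sum ideal.span_scale) simp
  finally have "Poly_Mapping.lookup (monom p - N * monom p) p = 0"
    using keys_span_monom_dvd p by (fastforce simp: in_keys_iff)
  moreover have "Poly_Mapping.lookup (N * monom p) p = Poly_Mapping.lookup N 0"
    using lookup_times_monom[of N p 0] by simp
  ultimately show ?thesis by (simp add: N_def lookup_minus monom_def)
qed

lemma weakly_regular_monomial_gens_coprime:
  fixes B :: "('v \<Rightarrow>\<^sub>0 nat) set" and fs :: "('v, 'k::comm_ring_1) mpoly list"
  assumes J: "ideal.span (monom ` B) = ideal.span (set fs)" and reg: "weakly_regular fs"
    and p: "p \<in> B" "\<And>b. b \<in> B \<Longrightarrow> mdvd b p \<Longrightarrow> b = p"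
    and q: "q \<in> B" "\<And>b. b \<in> B \<Longrightarrow> mdvd b q \<Longrightarrow> b = q"
    and "\<not> mdvd p q"
  shows "Poly_Mapping.lookup p y = 0 \<or> Poly_Mapping.lookup q y = 0"
proof (rule ccontr)
  assume "\<not> (Poly_Mapping.lookup p y = 0 \<or> Poly_Mapping.lookup q y = 0)"
  then have py: "Poly_Mapping.lookup p y \<noteq> 0" and qy: "Poly_Mapping.lookup q y \<noteq> 0" by auto
  define d where "d = Poly_Mapping.single y (1::nat)"
  define P where "P = p - d"
  define Q where "Q = q - d"
  have pd: "p = P + d" unfolding P_def d_def using py by (rule diff_single_add_single)
  have qd: "q = Q + d" unfolding Q_def d_def using qy by (rule diff_single_add_single)
  let ?J = "ideal.span (set fs) :: ('v, 'k) mpoly set"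
  let ?n = "length fs"
  have "monom p \<in> ?J" "monom q \<in> ?J" using J p q by (auto intro: ideal.span_base)
  then obtain \<beta> \<gamma> where \<beta>: "monom p = (\<Sum>k<?n. \<beta> k * fs ! k)"
    and \<gamma>: "monom q = (\<Sum>k<?n. \<gamma> k * fs ! k)"
    unfolding span_set_iff_sum_nth by blast
  have "monom Q * monom p = (monom P * monom q :: ('v, 'k) mpoly)"
    by (simp add: monom_def mult_single pd qd ac_simps)
  then have cJ: "monom Q * \<beta> k - monom P * \<gamma> k \<in> ?J" if "k < ?n" for k
    using weakly_regular_cross_coeffs_in_span[OF reg \<beta> \<gamma>] that by blast
  have "set fs \<subseteq> ideal.span (insert (monom p) (monom ` (B - {p})))"
    using J p(1) ideal.span_superset by (metis insert_Diff image_insert)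
  then obtain \<alpha> where \<alpha>: "\<And>k. k < ?n \<Longrightarrow> fs ! k - \<alpha> k * monom p \<in> ideal.span (monom ` (B - {p}))"
    by (rule span_insert_obtain_coeffs) blast
  define N where "N = (\<Sum>k<?n. \<beta> k * \<alpha> k)"
  define M where "M = (\<Sum>k<?n. \<gamma> k * \<alpha> k)"
  define E where "E = monom Q * N - monom P * M"
  have "E = (\<Sum>k<?n. \<alpha> k * (monom Q * \<beta> k - monom P * \<gamma> k))"
    unfolding E_def N_def M_def by (simp add: right_diff_distrib sum_subtractf sum_distrib_left ac_simps)
  also have "\<dots> \<in> ?J" using cJ by (intro ideal.span_sum ideal.span_scale) simp
  finally have EJ: "E \<in> ?J" .
  have "Poly_Mapping.lookup N 0 = 1"
    unfolding N_def using minimal_monom_const_coeff_eq_one[OF p \<beta> \<alpha>] .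
  moreover have "Poly_Mapping.lookup (monom P * M) Q = 0"
    using keys_times_monom_mdvd[of Q M P] \<open>\<not> mdvd p q\<close> pd qd
    by (auto simp: mult.commute in_keys_iff mdvd_add_cancel_right)
  ultimately have "Q \<in> Poly_Mapping.keys E"
    using lookup_times_monom[of N Q 0] by (simp add: E_def lookup_minus mult.commute in_keys_iff)
  then obtain b where "b \<in> B" "mdvd b Q" using keys_span_monom_dvd EJ J by metis
  moreover from this have "b = q" using q(2) mdvd_trans mdvd_add_right qd by metis
  ultimately show False using qd not_mdvd_add_single d_def by metis
qed

lemma min_gens_squarefree:
  assumes "squarefree_monomial_ideal I" "a \<in> min_gens I"
  shows "squarefree_exp a"
proof -
  obtain A where A: "\<forall>a\<in>A. squarefree_exp a" "I = ideal.span (monom ` A)"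
    using assms(1) unfolding squarefree_monomial_ideal_def ideal_gen_eq_span by blast
  have "a \<in> Poly_Mapping.keys (monom a :: ('a, 'b) mpoly)" by (simp add: monom_def)
  then obtain b where "b \<in> A" "mdvd b a"
    using keys_span_monom_dvd[of "monom a"] assms(2) A(2) unfolding min_gens_def by blast
  moreover have "monom b \<in> I" using \<open>b \<in> A\<close> A(2) by (simp add: ideal.span_base)
  ultimately show ?thesis using assms(2) A(1) unfolding min_gens_def by blast
qed

lemma min_gens_update_mdvd_imp_eq:
  assumes "squarefree_monomial_ideal I" "a \<in> min_gens I" "b \<in> min_gens I"
    and "x \<in> Poly_Mapping.keys a"
    and "mdvd (Poly_Mapping.update x 0 b) (Poly_Mapping.update x 0 a)"
  shows "b = a"
proof -
  have "Poly_Mapping.lookup b x \<le> 1"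
    using min_gens_squarefree[OF assms(1,3)] by (simp add: squarefree_exp_def)
  also have "1 \<le> Poly_Mapping.lookup a x" using assms(4) by (simp add: in_keys_iff)
  finally have "mdvd b a" using assms(5) unfolding mdvd_def by (metis lookup_update)
  then show ?thesis using assms(2,3) unfolding min_gens_def by blast
qed

lemma mdeg_mgcd_squarefree:
  assumes "squarefree_exp a"
  shows "mdeg (mgcd a b) = card (Poly_Mapping.keys a \<inter> Poly_Mapping.keys b)"
proof -
  have lookup_mgcd: "Poly_Mapping.lookup (mgcd a b) v
      = min (Poly_Mapping.lookup a v) (Poly_Mapping.lookup b v)" for v
  proof -
    have "finite {v. min (Poly_Mapping.lookup a v) (Poly_Mapping.lookup b v) \<noteq> 0}"
      by (rule finite_subset[of _ "Poly_Mapping.keys a"]) (auto simp: in_keys_iff)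
    then show ?thesis unfolding mgcd_def by simp
  qed
  then have keys: "Poly_Mapping.keys (mgcd a b) = Poly_Mapping.keys a \<inter> Poly_Mapping.keys b"
    by (auto simp: in_keys_iff)
  have a1: "Poly_Mapping.lookup a v = 1" if "v \<in> Poly_Mapping.keys a" for v
    using that assms[unfolded squarefree_exp_def, rule_format, of v] by (simp add: in_keys_iff)
  have "Poly_Mapping.lookup (mgcd a b) v = 1" if "v \<in> Poly_Mapping.keys (mgcd a b)" for v
    using that a1[of v] unfolding keys lookup_mgcd by (simp add: in_keys_iff min_def)
  then show ?thesis unfolding mdeg_def keys[symmetric] by simp
qed

lemma set_var_one_CI_common_variable_unique:
  assumes sq: "squarefree_monomial_ideal I" and CI: "is_CI (set_var_one I x)"
    and a1: "a1 \<in> min_gens I" and a2: "a2 \<in> min_gens I" "a1 \<noteq> a2"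
    and x: "x \<in> Poly_Mapping.keys a1 \<inter> Poly_Mapping.keys a2"
    and y: "y \<in> Poly_Mapping.keys a1 \<inter> Poly_Mapping.keys a2"
  shows "y = x"
proof (rule ccontr)
  assume "y \<noteq> x"
  obtain fs where fs: "regular_sequence fs" "set_var_one I x = ideal_gen (set fs)"
    using CI unfolding is_CI_def by blast
  define B where "B = Poly_Mapping.update x 0 ` min_gens I"
  have J: "ideal.span (monom ` B) = ideal.span (set fs)"
    using fs(2) unfolding set_var_one_def B_def ideal_gen_eq_span by (simp add: image_image)
  have minimal: "b = Poly_Mapping.update x 0 a"
    if "a \<in> min_gens I" "x \<in> Poly_Mapping.keys a" "b \<in> B" "mdvd b (Poly_Mapping.update x 0 a)" for a b
    using that min_gens_update_mdvd_imp_eq[OF sq] unfolding B_def by blast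
  have p: "Poly_Mapping.update x 0 a1 \<in> B"
    "\<And>b. b \<in> B \<Longrightarrow> mdvd b (Poly_Mapping.update x 0 a1) \<Longrightarrow> b = Poly_Mapping.update x 0 a1"
    using a1 x minimal unfolding B_def by blast+
  have q: "Poly_Mapping.update x 0 a2 \<in> B"
    "\<And>b. b \<in> B \<Longrightarrow> mdvd b (Poly_Mapping.update x 0 a2) \<Longrightarrow> b = Poly_Mapping.update x 0 a2"
    using a2 x minimal unfolding B_def by blast+
  have "\<not> mdvd (Poly_Mapping.update x 0 a1) (Poly_Mapping.update x 0 a2)"
    using min_gens_update_mdvd_imp_eq[OF sq a2(1) a1] x a2(2) by blast
  with J regular_sequence_imp_weakly_regular[OF fs(1)] p q
  have "Poly_Mapping.lookup (Poly_Mapping.update x 0 a1) y = 0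
      \<or> Poly_Mapping.lookup (Poly_Mapping.update x 0 a2) y = 0"
    by (rule weakly_regular_monomial_gens_coprime)
  then show False using y \<open>y \<noteq> x\<close> by (simp add: lookup_update in_keys_iff)
qed

theorem lemma4p1:
  fixes I :: "('v::finite, 'k::field) mpoly set"
    and a1 a2 :: "'v \<Rightarrow>\<^sub>0 nat"
  assumes "squarefree_monomial_ideal I"
    and "is_NCI I"
    and "a1 \<in> min_gens I" and "a2 \<in> min_gens I"
    and "a1 \<noteq> a2"
  shows "mdeg (mgcd a1 a2) \<le> 1"
proof -
  have "y = x" if "x \<in> Poly_Mapping.keys a1 \<inter> Poly_Mapping.keys a2"
    and "y \<in> Poly_Mapping.keys a1 \<inter> Poly_Mapping.keys a2" for x y
  proof -
    have "x \<in> ideal_support I" using assms(3) that(1) unfolding ideal_support_def by blast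
    then have "is_CI (set_var_one I x)" using assms(2) unfolding is_NCI_def by blast
    then show ?thesis using set_var_one_CI_common_variable_unique[OF assms(1) _ assms(3-5) that] by blast
  qed
  then have "card (Poly_Mapping.keys a1 \<inter> Poly_Mapping.keys a2) \<le> 1"
    by (simp add: card_le_Suc0_iff_eq)
  then show ?thesis using mdeg_mgcd_squarefree[OF min_gens_squarefree[OF assms(1,3)]] by simp
qed

end
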